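(* Assume the vector variational inequality defined by $F$ and $K$ is monotone. (i) If $\mathcal{A}$ and $\mathcal{B}$ are two different connected components of $\mathrm{Sol}^w(F,K)$, then $S^{-1}(\mathcal{A})\cap S^{-1}(\mathcal{B})=\emptyset$. (ii) If $\mathcal{A}$ and $\mathcal{B}$ are two different connected components of $\mathrm{Sol}^{pr}(F,K)$, then $\{\xi\in\operatorname{ri}\Delta: S(\xi)\cap\mathcal{A}\neq\emptyset\}\cap\{\xi\in\operatorname{ri}\Delta: S(\xi)\cap\mathcal{B}\neq\emptyset\}=\emptyset$.
   Context: Let $K\subset\mathbb{R}^n$ be a nonempty closed convex set and $F_1,\dots,F_m:K\to\mathbb{R}^n$ continuous functions; write $F=(F_1,\dots,F_m)$ and $F(x)(u)=(\langle F_1(x),u\rangle,\dots,\langle F_m(x),u\rangle)$. The problem is monotone if each $F_l$ is monotone on $K$: $\langle F_l(y)-F_l(x),y-x\rangle\ge0$ for all $x,y\in K$. Let $\Delta=\{\xi\in\mathbb{R}^m_+ : \sum_l\xi_l=1\}$, $\operatorname{ri}\Delta=\{\xi\in\Delta:\xi_l>0,\ l=1,\dots,m\}$, and $F_\xi=\sum_l\xi_lF_l$. For $G:K\to\mathbb{R}^n$, $\mathrm{Sol}(G,K)=\{x\in K:\langle G(x),y-x\rangle\ge0\ \forall y\in K\}$. The weak Pareto solution set $\mathrm{Sol}^w(F,K)$ is the set of $x\in K$ with $F(x)(x-y)\notin\operatorname{int}\mathbb{R}^m_+$ for all $y\in K$; it is known that $\mathrm{Sol}^w(F,K)=\bigcup_{\xi\in\Delta}\mathrm{Sol}(F_\xi,K)$.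 The proper Pareto solution set is $\mathrm{Sol}^{pr}(F,K)=\bigcup_{\xi\in\operatorname{ri}\Delta}\mathrm{Sol}(F_\xi,K)$. The basic multifunction is $S(\xi)=\mathrm{Sol}(F_\xi,K)$ for $\xi\in\Delta$, and $S^{-1}(\mathcal{A})=\{\xi\in\Delta:S(\xi)\cap\mathcal{A}\ne\emptyset\}$. *)

theory Defs
  imports "HOL-Analysis.Analysis"
begin

text \<open>Objectives are indexed by a finite type 'm (m = CARD('m)); vectors live in real^'n.\<close>

definition weight_simplex :: "('m::finite \<Rightarrow> real) set" where
  "weight_simplex = {\<xi>. (\<forall>l. 0 \<le> \<xi> l) \<and> (\<Sum>l\<in>UNIV. \<xi> l) = 1}"

definition ri_weight_simplex :: "('m::finite \<Rightarrow> real) set" where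
  "ri_weight_simplex = {\<xi>\<in>weight_simplex. \<forall>l. 0 < \<xi> l}"

definition VI_sol :: "(real^'n \<Rightarrow> real^'n) \<Rightarrow> (real^'n) set \<Rightarrow> (real^'n) set" where
  "VI_sol G K = {x\<in>K. \<forall>y\<in>K. inner (G x) (y - x) \<ge> 0}"

definition scal :: "('m::finite \<Rightarrow> real^'n \<Rightarrow> real^'n) \<Rightarrow> ('m \<Rightarrow> real) \<Rightarrow> real^'n \<Rightarrow> real^'n" where
  "scal F \<xi> x = (\<Sum>l\<in>UNIV. \<xi> l *\<^sub>R F l x)"

text \<open>Weak Pareto solutions: F(x)(x-y) not in int R^m_+ (i.e. not all components > 0).\<close>
definition weak_sol :: "('m::finite \<Rightarrow> real^'n \<Rightarrow> real^'n) \<Rightarrow> (real^'n) set \<Rightarrow> (real^'n) set" where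
  "weak_sol F K = {x\<in>K. \<forall>y\<in>K. \<not> (\<forall>l. inner (F l x) (x - y) > 0)}"

definition proper_sol :: "('m::finite \<Rightarrow> real^'n \<Rightarrow> real^'n) \<Rightarrow> (real^'n) set \<Rightarrow> (real^'n) set" where
  "proper_sol F K = (\<Union>\<xi>\<in>ri_weight_simplex. VI_sol (scal F \<xi>) K)"

definition basic_S :: "('m::finite \<Rightarrow> real^'n \<Rightarrow> real^'n) \<Rightarrow> (real^'n) set \<Rightarrow> ('m \<Rightarrow> real) \<Rightarrow> (real^'n) set" where
  "basic_S F K \<xi> = VI_sol (scal F \<xi>) K"

definition S_inv :: "('m::finite \<Rightarrow> real^'n \<Rightarrow> real^'n) \<Rightarrow> (real^'n) set \<Rightarrow> (real^'n) set \<Rightarrow> ('m \<Rightarrow> real) set" where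
  "S_inv F K A = {\<xi>\<in>weight_simplex. basic_S F K \<xi> \<inter> A \<noteq> {}}"

definition is_component :: "'a::topological_space set \<Rightarrow> 'a set \<Rightarrow> bool" where
  "is_component A X \<longleftrightarrow> (\<exists>x\<in>X. A = connected_component_set X x)"

definition monotone_on_set :: "(real^'n \<Rightarrow> real^'n) \<Rightarrow> (real^'n) set \<Rightarrow> bool" where
  "monotone_on_set G K \<longleftrightarrow> (\<forall>x\<in>K. \<forall>y\<in>K. inner (G y - G x) (y - x) \<ge> 0)"

end

theory Submission
  imports Defs
begin

text \<open>For every weight \<open>\<xi>\<close> the scalarised map \<open>F\<^sub>\<xi>\<close> is monotone and continuous, so by
  Minty's lemma \<open>S(\<xi>)\<close> is an intersection of half-spaces with \<open>K\<close>, hence convex and connected.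
  A connected subset of a space meeting two components lies in both, so they coincide.
  Since every \<open>S(\<xi>)\<close> lies in \<open>Sol\<^sup>w(F,K)\<close>, and in \<open>Sol\<^sup>p\<^sup>r(F,K)\<close> when \<open>\<xi> \<in> ri \<Delta>\<close>,
  no weight can hit two different components.\<close>

lemma continuous_on_scal:
  assumes "\<And>l. continuous_on K (F l)"
  shows "continuous_on K (scal F \<xi>)"
  unfolding scal_def[abs_def] by (intro continuous_intros assms)

lemma monotone_on_set_scal:
  assumes "\<And>l. monotone_on_set (F l) K" and "\<And>l. 0 \<le> \<xi> l"
  shows "monotone_on_set (scal F \<xi>) K"
  unfolding monotone_on_set_def
proof (intro ballI)
  fix x y assume "x \<in> K" "y \<in> K"
  have "scal F \<xi> y - scal F \<xi> x = (\<Sum>l\<in>UNIV. \<xi> l *\<^sub>R (F l y - F l x))"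
    by (simp add: scal_def sum_subtractf scaleR_right_diff_distrib)
  then have "inner (scal F \<xi> y - scal F \<xi> x) (y - x) = (\<Sum>l\<in>UNIV. \<xi> l * inner (F l y - F l x) (y - x))"
    by (simp add: inner_sum_left)
  also have "\<dots> \<ge> 0"
    using assms \<open>x \<in> K\<close> \<open>y \<in> K\<close> unfolding monotone_on_set_def
    by (intro sum_nonneg mult_nonneg_nonneg) auto
  finally show "inner (scal F \<xi> y - scal F \<xi> x) (y - x) \<ge> 0" .
qed

text \<open>Minty's lemma: test the Minty inequality at \<open>x + t (y - x)\<close> and let \<open>t \<rightarrow> 0\<^sup>+\<close>.\<close>

lemma minty_imp_variational_inequality:
  fixes G :: "'a::real_inner \<Rightarrow> 'a"
  assumes "convex K" and "continuous_on K G" and "x \<in> K" and "y \<in> K"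
    and minty: "\<And>z. z \<in> K \<Longrightarrow> inner (G z) (z - x) \<ge> 0"
  shows "inner (G x) (y - x) \<ge> 0"
proof -
  define t where "t n = 1 / (real n + 1)" for n
  define z where "z n = x + t n *\<^sub>R (y - x)" for n
  have t_pos: "0 < t n" and t_le: "t n \<le> 1" for n
    by (simp_all add: t_def)
  have z_in_K: "z n \<in> K" for n
  proof -
    have "z n = (1 - t n) *\<^sub>R x + t n *\<^sub>R y"
      by (simp add: z_def algebra_simps)
    then show ?thesis
      using \<open>convex K\<close> \<open>x \<in> K\<close> \<open>y \<in> K\<close> t_pos[of n] t_le[of n] unfolding convex_alt by simp
  qed
  have "t \<longlonglongrightarrow> 0"
    using LIMSEQ_inverse_real_of_nat unfolding t_def[abs_def] by (simp add: inverse_eq_divide add.commute)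
  then have "(\<lambda>n. x + t n *\<^sub>R (y - x)) \<longlonglongrightarrow> x + 0 *\<^sub>R (y - x)"
    by (intro tendsto_intros)
  then have "z \<longlonglongrightarrow> x"
    by (simp add: z_def[abs_def])
  then have "(\<lambda>n. G (z n)) \<longlonglongrightarrow> G x"
    using assms(2,3) z_in_K continuous_on_sequentially[of K G] unfolding o_def by blast
  then have limit: "(\<lambda>n. inner (G (z n)) (y - x)) \<longlonglongrightarrow> inner (G x) (y - x)"
    by (intro tendsto_intros)
  have "inner (G (z n)) (y - x) \<ge> 0" for n
  proof -
    have "0 \<le> inner (G (z n)) (z n - x)"
      using minty z_in_K by blast
    also have "\<dots> = t n * inner (G (z n)) (y - x)"
      by (simp add: z_def)
    finally show ?thesis
      using t_pos[of n] by (simp add: zero_le_mult_iff)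
  qed
  then show ?thesis
    by (intro tendsto_lowerbound[OF limit]) auto
qed

lemma VI_sol_eq_minty:
  assumes "convex K" and "continuous_on K G" and "monotone_on_set G K"
  shows "VI_sol G K = K \<inter> (\<Inter>z\<in>K. {x. inner (G z) (z - x) \<ge> 0})"
proof (intro set_eqI iffI)
  fix x assume "x \<in> VI_sol G K"
  then have "x \<in> K" and vi: "\<And>y. y \<in> K \<Longrightarrow> inner (G x) (y - x) \<ge> 0"
    by (auto simp: VI_sol_def)
  have "inner (G z) (z - x) \<ge> 0" if "z \<in> K" for z
  proof -
    have "inner (G z - G x) (z - x) \<ge> 0"
      using \<open>monotone_on_set G K\<close> \<open>x \<in> K\<close> \<open>z \<in> K\<close> by (simp add: monotone_on_set_def)
    then show ?thesis
      using vi[OF \<open>z \<in> K\<close>] by (simp add: inner_diff_left)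
  qed
  then show "x \<in> K \<inter> (\<Inter>z\<in>K. {x. inner (G z) (z - x) \<ge> 0})"
    using \<open>x \<in> K\<close> by blast
next
  fix x assume "x \<in> K \<inter> (\<Inter>z\<in>K. {x. inner (G z) (z - x) \<ge> 0})"
  then show "x \<in> VI_sol G K"
    using minty_imp_variational_inequality[OF assms(1,2)] by (auto simp: VI_sol_def)
qed

lemma convex_VI_sol:
  assumes "convex K" and "continuous_on K G" and "monotone_on_set G K"
  shows "convex (VI_sol G K)"
proof -
  have "{x. inner (G z) (z - x) \<ge> 0} = {x. inner (G z) x \<le> inner (G z) z}" for z
    by (auto simp: inner_diff_right)
  then show ?thesis
    unfolding VI_sol_eq_minty[OF assms]
    by (auto intro!: convex_Int convex_INT \<open>convex K\<close> simp: convex_halfspace_le)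
qed

lemma convex_basic_S:
  assumes "convex K" and "\<And>l. continuous_on K (F l)" and "\<And>l. monotone_on_set (F l) K"
    and "\<xi> \<in> weight_simplex"
  shows "convex (basic_S F K \<xi>)"
  using assms unfolding basic_S_def weight_simplex_def
  by (intro convex_VI_sol continuous_on_scal monotone_on_set_scal) auto

lemma basic_S_subset_weak_sol:
  assumes "\<xi> \<in> weight_simplex"
  shows "basic_S F K \<xi> \<subseteq> weak_sol F K"
proof
  fix x assume "x \<in> basic_S F K \<xi>"
  then have "x \<in> K" and vi: "\<And>y. y \<in> K \<Longrightarrow> inner (scal F \<xi> x) (y - x) \<ge> 0"
    by (auto simp: basic_S_def VI_sol_def)
  have nonneg: "\<And>l. 0 \<le> \<xi> l" and "(\<Sum>l\<in>UNIV. \<xi> l) = 1"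
    using assms by (auto simp: weight_simplex_def)
  then obtain l0 where "\<xi> l0 \<noteq> 0"
    by (metis sum.neutral zero_neq_one)
  have "\<not> (\<forall>l. inner (F l x) (x - y) > 0)" if "y \<in> K" for y
  proof
    assume pos: "\<forall>l. inner (F l x) (x - y) > 0"
    have "0 < (\<Sum>l\<in>UNIV. \<xi> l * inner (F l x) (x - y))"
    proof (rule sum_pos2[of UNIV l0])
      show "0 < \<xi> l0 * inner (F l0 x) (x - y)"
        using \<open>\<xi> l0 \<noteq> 0\<close> nonneg[of l0] pos by (simp add: order_less_le)
    qed (use nonneg pos in \<open>auto intro: mult_nonneg_nonneg less_imp_le\<close>)
    also have "\<dots> = - inner (scal F \<xi> x) (y - x)"
      by (simp add: scal_def inner_sum_left inner_diff_right sum_subtractf right_diff_distrib)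
    finally show False
      using vi[OF \<open>y \<in> K\<close>] by simp
  qed
  then show "x \<in> weak_sol F K"
    using \<open>x \<in> K\<close> by (auto simp: weak_sol_def)
qed

lemma basic_S_subset_proper_sol:
  assumes "\<xi> \<in> ri_weight_simplex"
  shows "basic_S F K \<xi> \<subseteq> proper_sol F K"
  using assms unfolding proper_sol_def basic_S_def by blast

lemma is_component_iff_components: "is_component A X \<longleftrightarrow> A \<in> components X"
  by (auto simp: is_component_def components_iff)

lemma connected_subset_meets_one_component:
  assumes "is_component A X" and "is_component B X" and "A \<noteq> B"
    and "connected C" and "C \<subseteq> X" and "C \<inter> A \<noteq> {}"
  shows "C \<inter> B = {}"
proof -
  have "C \<subseteq> A"
    using assms components_maximal[of A X C] by (auto simp: is_component_iff_components)
  moreover have "A \<inter> B = {}"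
    using assms components_nonoverlap[of A X B] by (auto simp: is_component_iff_components)
  ultimately show ?thesis by blast
qed

theorem proposition2:
  fixes F :: "'m::finite \<Rightarrow> real^'n \<Rightarrow> real^'n" and K :: "(real^'n) set"
  assumes "K \<noteq> {}" and "closed K" and "convex K"
    and "\<And>l. continuous_on K (F l)"
    and "\<And>l. monotone_on_set (F l) K"
  shows "(\<forall>A B. is_component A (weak_sol F K) \<and> is_component B (weak_sol F K) \<and> A \<noteq> B
              \<longrightarrow> S_inv F K A \<inter> S_inv F K B = {})
       \<and> (\<forall>A B. is_component A (proper_sol F K) \<and> is_component B (proper_sol F K) \<and> A \<noteq> B
              \<longrightarrow> {\<xi>\<in>ri_weight_simplex. basic_S F K \<xi> \<inter> A \<noteq> {}}
                  \<inter> {\<xi>\<in>ri_weight_simplex. basic_S F K \<xi> \<inter> B \<noteq> {}} = {})"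
proof (intro conjI allI impI)
  fix A B
  assume "is_component A (weak_sol F K) \<and> is_component B (weak_sol F K) \<and> A \<noteq> B"
  then show "S_inv F K A \<inter> S_inv F K B = {}"
    using connected_subset_meets_one_component[of A _ B, OF _ _ _ convex_connected[OF
        convex_basic_S[OF assms(3-5)]] basic_S_subset_weak_sol]
    by (fastforce simp: S_inv_def)
next
  fix A B
  assume "is_component A (proper_sol F K) \<and> is_component B (proper_sol F K) \<and> A \<noteq> B"
  then show "{\<xi>\<in>ri_weight_simplex. basic_S F K \<xi> \<inter> A \<noteq> {}}
      \<inter> {\<xi>\<in>ri_weight_simplex. basic_S F K \<xi> \<inter> B \<noteq> {}} = {}"
    using connected_subset_meets_one_component[of A _ B, OF _ _ _ convex_connected[OF
        convex_basic_S[OF assms(3-5)]] basic_S_subset_proper_sol]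
    by (fastforce simp: ri_weight_simplex_def)
qed

end
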